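(* Let $L=\{0,1,\dots,m\}^n$ ordered componentwise, with bottom $\bot=(0,\dots,0)$. For each $i\in\{1,\dots,n\}$ let $f_i:L\to L$ be monotone and inflationary. Consider a non-interleaving execution with update-only-on-change starting from $G_0=\bot$, in which at each round $t$ a scheduler selects $S_t\subseteq\{1,\dots,n\}$ and $G_{t+1}$ is any committed state reachable by the concurrent execution of $\{f_i: i\in S_t\}$ from $G_t$. Assume the scheduler is fair: each index $i$ belongs to $S_t$ for infinitely many $t$. Then there exists $T$ with $G_t=G^*$ for all $t\ge T$, and $G^*$ is the least common fixed point of $\{f_1,\dots,f_n\}$.
   Context: Non-interleaving execution with update-only-on-change: execution proceeds in rounds $t=0,1,2,\dots$ with committed states $G_t\in L$. In round $t$ each $f_i$, $i\in S_t$, is executed concurrently on shared memory: process $i$ reads a vector $X\in L$, where each coordinate $X[k]$ is read at some time during the round and returns either $G_t[k]$ or the value of some write to coordinate $k$ performed during the round (reads and writes overlapping arbitrarily; no memory consistency guarantee). Process $i$ computes $H=f_i(X)$ and, for each coordinate $k$, issues a write of $H[k]$ to coordinate $k$ if and only if $H[k]\neq X[k]$. When several writes to the same coordinate occur, the final value is the value of one of them (last writer wins in an arbitrary order). At the end of the round, $G_{t+1}[k]=G_t[k]$ if no write to coordinate $k$ occurred, and otherwise $G_{t+1}[k]$ equals the value of one of the writes to coordinate $k$ during the round. A function $f$ is inflationary if $f(G)\ge G$ for all $G$, monotone if $G\le H\Rightarrow f(G)\le f(H)$. The least common fixed point is the least $G\in L$ with $f_i(G)=G$ for all $i$. *)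

theory Defs
  imports Main
begin

text \<open>States of the lattice L = {0..m}^n are represented as functions nat => nat
  that are bounded by m on coordinates 0..n-1 and equal to 0 on all other
  coordinates.
  Coordinates and process indices are 0..n-1 instead of 1..n.\<close>

definition stL :: "nat \<Rightarrow> nat \<Rightarrow> (nat \<Rightarrow> nat) set" where
  "stL n m = {G. \<forall>k. (k < n \<longrightarrow> G k \<le> m) \<and> (n \<le> k \<longrightarrow> G k = 0)}"

definition monotone_L :: "nat \<Rightarrow> nat \<Rightarrow> ((nat \<Rightarrow> nat) \<Rightarrow> (nat \<Rightarrow> nat)) \<Rightarrow> bool" where
  "monotone_L n m g \<longleftrightarrow> (\<forall>G\<in>stL n m. \<forall>H\<in>stL n m. G \<le> H \<longrightarrow> g G \<le> g H)"

definition inflationary_L :: "nat \<Rightarrow> nat \<Rightarrow> ((nat \<Rightarrow> nat) \<Rightarrow> (nat \<Rightarrow> nat)) \<Rightarrow> bool" where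
  "inflationary_L n m g \<longleftrightarrow> (\<forall>G\<in>stL n m. G \<le> g G)"

text \<open>Process i in S reads vector X i; coordinate k is read at time rd i k.
  It computes f i (X i) and writes coordinate k (at time wr i k) iff the
  computed value differs from the read one. All writes of a process happen
  strictly after all of its reads (it must first compute f i (X i)).
  A read either returns the committed value G k, or the value of a write
  to k that has been performed no later than the read (causality).
  The committed value after the round is unchanged when no write happened,
  otherwise it is the value of one of the writes (arbitrary winner).\<close>

definition round_step ::
  "nat \<Rightarrow> nat \<Rightarrow> (nat \<Rightarrow> (nat \<Rightarrow> nat) \<Rightarrow> (nat \<Rightarrow> nat)) \<Rightarrow> nat set
     \<Rightarrow> (nat \<Rightarrow> nat) \<Rightarrow> (nat \<Rightarrow> nat) \<Rightarrow> bool" where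
  "round_step n m f S G G' \<longleftrightarrow>
    (\<exists>(X :: nat \<Rightarrow> nat \<Rightarrow> nat) (rd :: nat \<Rightarrow> nat \<Rightarrow> nat) (wr :: nat \<Rightarrow> nat \<Rightarrow> nat).
       (\<forall>i\<in>S. X i \<in> stL n m)
     \<and> (\<forall>i\<in>S. \<forall>k<n. \<forall>k'<n. rd i k' < wr i k)
     \<and> (\<forall>i\<in>S. \<forall>k<n. X i k = G k \<or>
           (\<exists>j\<in>S. f j (X j) k \<noteq> X j k \<and> wr j k \<le> rd i k \<and> X i k = f j (X j) k))
     \<and> (\<forall>k<n. (\<forall>j\<in>S. f j (X j) k = X j k) \<longrightarrow> G' k = G k)
     \<and> (\<forall>k<n. (\<exists>j\<in>S. f j (X j) k \<noteq> X j k) \<longrightarrow>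
           (\<exists>j\<in>S. f j (X j) k \<noteq> X j k \<and> G' k = f j (X j) k))
     \<and> (\<forall>k. n \<le> k \<longrightarrow> G' k = G k))"

definition least_common_fp ::
  "nat \<Rightarrow> nat \<Rightarrow> (nat \<Rightarrow> (nat \<Rightarrow> nat) \<Rightarrow> (nat \<Rightarrow> nat)) \<Rightarrow> (nat \<Rightarrow> nat) \<Rightarrow> bool" where
  "least_common_fp n m f Gs \<longleftrightarrow>
     Gs \<in> stL n m \<and> (\<forall>i<n. f i Gs = Gs) \<and>
     (\<forall>H\<in>stL n m. (\<forall>i<n. f i H = H) \<longrightarrow> Gs \<le> H)"

end

theory Submission
  imports Defs "HOL-Library.Infinite_Set"
begin

text \<open>Every value that is read or written during a round lies between the committed state
  G and any common fixed point H above it: a read returns either G or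
  a value written by a process whose own reads all happened earlier, so this follows by
  induction on the read time, using inflation for the lower and monotonicity for the upper
  bound. Hence the committed states increase and stay below every common fixed point; a round
  that changes nothing can only consist of processes that read G and found it fixed.
  In the finite lattice the increasing sequence becomes constant, and fairness makes its
  final value a fixed point of every f i, necessarily the least one.\<close>

lemma stL_le_iff:
  assumes "A \<in> stL n m" "B \<in> stL n m"
  shows "A \<le> B \<longleftrightarrow> (\<forall>k<n. A k \<le> B k)"
  using assms by (auto simp: stL_def le_fun_def) (metis le_refl not_le)

lemma stL_eqI:
  assumes "A \<in> stL n m" "B \<in> stL n m" "\<And>k. k < n \<Longrightarrow> A k = B k"
  shows "A = B"
  using assms by (simp add: stL_def fun_eq_iff) (metis not_le)

lemma finite_stL: "finite (stL n m)"
proof -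
  have "finite {G. \<forall>k. (k \<in> {..<n} \<longrightarrow> G k \<in> {..m}) \<and> (k \<notin> {..<n} \<longrightarrow> G k = 0)}"
    by (rule finite_set_of_finite_funs) simp_all
  also have "{G. \<forall>k. (k \<in> {..<n} \<longrightarrow> G k \<in> {..m}) \<and> (k \<notin> {..<n} \<longrightarrow> G k = 0)} = stL n m"
    by (auto simp: stL_def not_less)
  finally show ?thesis .
qed

lemma zero_in_stL: "(\<lambda>k. 0) \<in> stL n m"
  by (simp add: stL_def)

lemma mono_finite_range_eventually_const:
  fixes g :: "nat \<Rightarrow> 'a::order"
  assumes "mono g" and "finite (range g)"
  shows "\<exists>T. \<forall>t\<ge>T. g t = g T"
proof -
  obtain T where T: "infinite {t. g t = g T}"
    using pigeonhole_infinite[of "UNIV :: nat set" g] assms(2) by auto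
  have "g t = g T" if "t \<ge> T" for t
  proof -
    obtain t' where "t' \<ge> t" "g t' = g T"
      using T by (auto simp: infinite_nat_iff_unbounded_le)
    with \<open>t \<ge> T\<close> \<open>mono g\<close> show ?thesis
      by (metis antisym monoD)
  qed
  then show ?thesis by blast
qed

locale concurrent_round =
  fixes n m :: nat
    and f :: "nat \<Rightarrow> (nat \<Rightarrow> nat) \<Rightarrow> (nat \<Rightarrow> nat)"
    and S :: "nat set"
    and G G' :: "nat \<Rightarrow> nat"
    and X rd wr :: "nat \<Rightarrow> nat \<Rightarrow> nat"
  assumes reads_in_stL: "\<forall>i\<in>S. X i \<in> stL n m"
    and reads_before_writes: "\<forall>i\<in>S. \<forall>k<n. \<forall>k'<n. rd i k' < wr i k"
    and read_source: "\<forall>i\<in>S. \<forall>k<n. X i k = G k \<or>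
           (\<exists>j\<in>S. f j (X j) k \<noteq> X j k \<and> wr j k \<le> rd i k \<and> X i k = f j (X j) k)"
    and unwritten: "\<forall>k<n. (\<forall>j\<in>S. f j (X j) k = X j k) \<longrightarrow> G' k = G k"
    and written: "\<forall>k<n. (\<exists>j\<in>S. f j (X j) k \<noteq> X j k) \<longrightarrow>
           (\<exists>j\<in>S. f j (X j) k \<noteq> X j k \<and> G' k = f j (X j) k)"
    and outside: "\<forall>k. n \<le> k \<longrightarrow> G' k = G k"

lemma round_step_iff:
  "round_step n m f S G G' \<longleftrightarrow> (\<exists>X rd wr. concurrent_round n m f S G G' X rd wr)"
  by (simp add: round_step_def concurrent_round_def)

context concurrent_round
begin

lemma reads_induct:
  assumes committed: "\<And>k. k < n \<Longrightarrow> P k (G k)"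
    and computed: "\<And>j. j \<in> S \<Longrightarrow> \<forall>k<n. P k (X j k) \<Longrightarrow> \<forall>k<n. P k (f j (X j) k)"
    and "i \<in> S" "k < n"
  shows "P k (X i k)"
  using \<open>i \<in> S\<close> \<open>k < n\<close>
proof (induction "rd i k" arbitrary: i k rule: less_induct)
  case less
  consider "X i k = G k"
    | j where "j \<in> S" "wr j k \<le> rd i k" "X i k = f j (X j) k"
    using read_source less.prems by blast
  then show ?case
  proof cases
    case 1
    then show ?thesis using committed less.prems by simp
  next
    case 2
    have "P k' (X j k')" if "k' < n" for k'
      using less.hyps[of j k'] reads_before_writes 2 less.prems that by fastforce
    then show ?thesis using computed[OF \<open>j \<in> S\<close>] 2 less.prems by simp
  qed
qed

lemma next_value_cases:
  assumes "k < n"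
  obtains "G' k = G k"
    | j where "j \<in> S" "f j (X j) k \<noteq> X j k" "G' k = f j (X j) k"
  using unwritten written assms by blast

lemma reads_le_fixpoint:
  assumes mono: "\<And>j. j \<in> S \<Longrightarrow> monotone_L n m (f j)"
    and H: "H \<in> stL n m" "\<And>j. j \<in> S \<Longrightarrow> f j H = H"
    and "G \<le> H" "i \<in> S"
  shows "X i \<le> H"
proof -
  have "\<forall>k<n. f j (X j) k \<le> H k" if j: "j \<in> S" and below: "\<forall>k<n. X j k \<le> H k" for j
  proof -
    have "X j \<le> H"
      using below j reads_in_stL H(1) stL_le_iff by blast
    then have "f j (X j) \<le> f j H"
      using mono[OF j] reads_in_stL j H(1) by (simp add: monotone_L_def)
    then show ?thesis
      using H(2)[OF j] by (simp add: le_fun_def)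
  qed
  then have "\<forall>k<n. X i k \<le> H k"
    using reads_induct[of "\<lambda>k x. x \<le> H k"] \<open>G \<le> H\<close> \<open>i \<in> S\<close> by (simp add: le_fun_def)
  then show ?thesis
    using stL_le_iff H(1) reads_in_stL \<open>i \<in> S\<close> by blast
qed

lemma next_le_fixpoint:
  assumes mono: "\<And>j. j \<in> S \<Longrightarrow> monotone_L n m (f j)"
    and H: "H \<in> stL n m" "\<And>j. j \<in> S \<Longrightarrow> f j H = H"
    and "G \<le> H"
  shows "G' \<le> H"
proof -
  have "G' k \<le> H k" if k: "k < n" for k
    using k
  proof (cases rule: next_value_cases)
    case 1
    then show ?thesis using \<open>G \<le> H\<close> by (simp add: le_fun_def)
  next
    case (2 j)
    have "f j (X j) \<le> f j H"
      using mono[OF \<open>j \<in> S\<close>] reads_le_fixpoint[OF mono H \<open>G \<le> H\<close> \<open>j \<in> S\<close>]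
        reads_in_stL \<open>j \<in> S\<close> H(1) by (simp add: monotone_L_def)
    then show ?thesis using 2 H(2) by (simp add: le_fun_def)
  qed
  then show ?thesis
    using outside \<open>G \<le> H\<close> by (simp add: le_fun_def) (metis not_le)
qed

end

locale inflationary_round = concurrent_round +
  assumes f_maps: "\<And>i Y. i \<in> S \<Longrightarrow> Y \<in> stL n m \<Longrightarrow> f i Y \<in> stL n m"
    and f_infl: "\<And>i. i \<in> S \<Longrightarrow> inflationary_L n m (f i)"
    and committed_in_stL: "G \<in> stL n m"
begin

lemma reads_inflate:
  assumes "i \<in> S"
  shows "X i \<le> f i (X i)"
  using f_infl[OF assms] reads_in_stL assms by (simp add: inflationary_L_def)

lemma committed_le_reads:
  assumes "i \<in> S"
  shows "G \<le> X i"
proof -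
  have "\<forall>k<n. G k \<le> f j (X j) k" if j: "j \<in> S" and above: "\<forall>k<n. G k \<le> X j k" for j
    using above reads_inflate[OF j] by (auto simp: le_fun_def intro: order_trans)
  then have "\<forall>k<n. G k \<le> X i k"
    using reads_induct[of "\<lambda>k x. G k \<le> x"] \<open>i \<in> S\<close> by simp
  then show ?thesis
    using stL_le_iff committed_in_stL reads_in_stL \<open>i \<in> S\<close> by blast
qed

lemma writes_increase:
  assumes "j \<in> S" "f j (X j) k \<noteq> X j k"
  shows "G k < f j (X j) k"
proof -
  have "G k \<le> X j k" "X j k \<le> f j (X j) k"
    using committed_le_reads[OF \<open>j \<in> S\<close>] reads_inflate[OF \<open>j \<in> S\<close>] by (simp_all add: le_fun_def)
  then show ?thesis
    using assms(2) by simp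
qed

lemma next_in_stL: "G' \<in> stL n m"
proof -
  have "G' k \<le> m" if k: "k < n" for k
    using k
  proof (cases rule: next_value_cases)
    case 1
    then show ?thesis using committed_in_stL k by (simp add: stL_def)
  next
    case (2 j)
    then show ?thesis using f_maps[OF \<open>j \<in> S\<close>] reads_in_stL k by (simp add: stL_def)
  qed
  then show ?thesis
    using outside committed_in_stL by (simp add: stL_def)
qed

lemma committed_le_next: "G \<le> G'"
proof -
  have "G k \<le> G' k" if k: "k < n" for k
    using k by (cases rule: next_value_cases) (auto dest: writes_increase)
  then show ?thesis
    using committed_in_stL next_in_stL stL_le_iff by blast
qed

lemma unchanged_imp_fixed:
  assumes "G' = G" "i \<in> S"
  shows "f i G = G"
proof -
  have no_write: "f j (X j) k = X j k" if j: "j \<in> S" and k: "k < n" for j k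
  proof (rule ccontr)
    assume "f j (X j) k \<noteq> X j k"
    then obtain j' where "j' \<in> S" "f j' (X j') k \<noteq> X j' k" "G' k = f j' (X j') k"
      using written j k by blast
    then have "G k < G' k"
      using writes_increase by simp
    with assms(1) show False by simp
  qed
  have "X i k = G k" if "k < n" for k
    using read_source no_write \<open>i \<in> S\<close> that by blast
  then have "X i = G"
    using reads_in_stL committed_in_stL \<open>i \<in> S\<close> by (blast intro: stL_eqI)
  then show ?thesis
    using no_write \<open>i \<in> S\<close> f_maps[OF \<open>i \<in> S\<close> committed_in_stL] committed_in_stL
    by (metis stL_eqI)
qed

end

lemma round_step_increasing:
  assumes "\<And>i Y. i \<in> S \<Longrightarrow> Y \<in> stL n m \<Longrightarrow> f i Y \<in> stL n m"
    and "\<And>i. i \<in> S \<Longrightarrow> inflationary_L n m (f i)"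
    and "round_step n m f S G G'" "G \<in> stL n m"
  shows "G \<le> G'" "G' \<in> stL n m" "G' = G \<Longrightarrow> i \<in> S \<Longrightarrow> f i G = G"
proof -
  obtain X rd wr where "concurrent_round n m f S G G' X rd wr"
    using assms(3) round_step_iff by blast
  then interpret inflationary_round n m f S G G' X rd wr
    using assms by (intro inflationary_round.intro inflationary_round_axioms.intro)
  show "G \<le> G'" "G' \<in> stL n m" "G' = G \<Longrightarrow> i \<in> S \<Longrightarrow> f i G = G"
    using committed_le_next next_in_stL unchanged_imp_fixed by auto
qed

lemma round_step_le_fixpoint:
  assumes "\<And>i. i \<in> S \<Longrightarrow> monotone_L n m (f i)"
    and "round_step n m f S G G'"
    and "H \<in> stL n m" "\<And>i. i \<in> S \<Longrightarrow> f i H = H" "G \<le> H"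
  shows "G' \<le> H"
proof -
  obtain X rd wr where "concurrent_round n m f S G G' X rd wr"
    using assms(2) round_step_iff by blast
  then show ?thesis
    using concurrent_round.next_le_fixpoint assms by blast
qed

theorem theorem3:
  fixes n m :: nat
    and f :: "nat \<Rightarrow> (nat \<Rightarrow> nat) \<Rightarrow> (nat \<Rightarrow> nat)"
    and S :: "nat \<Rightarrow> nat set"
    and G :: "nat \<Rightarrow> (nat \<Rightarrow> nat)"
  assumes f_maps: "\<And>i G. i < n \<Longrightarrow> G \<in> stL n m \<Longrightarrow> f i G \<in> stL n m"
    and f_mono: "\<And>i. i < n \<Longrightarrow> monotone_L n m (f i)"
    and f_infl: "\<And>i. i < n \<Longrightarrow> inflationary_L n m (f i)"
    and G0: "G 0 = (\<lambda>k. 0)"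
    and S_sub: "\<And>t. S t \<subseteq> {..<n}"
    and step: "\<And>t. round_step n m f (S t) (G t) (G (Suc t))"
    and fair: "\<And>i. i < n \<Longrightarrow> infinite {t. i \<in> S t}"
  shows "\<exists>T Gs. (\<forall>t\<ge>T. G t = Gs) \<and> least_common_fp n m f Gs"
proof -
  have in_S: "i < n" if "i \<in> S t" for i t
    using S_sub that by blast
  have round: "G t \<le> G (Suc t)" "G (Suc t) \<in> stL n m"
    "G (Suc t) = G t \<Longrightarrow> i \<in> S t \<Longrightarrow> f i (G t) = G t" if "G t \<in> stL n m" for t i
    using round_step_increasing[of "S t" n m f, OF _ _ step that] f_maps f_infl in_S by blast+
  have G_in_stL: "G t \<in> stL n m" for t
    by (induction t) (simp_all add: G0 zero_in_stL round(2))
  have "mono G"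
    using round(1) G_in_stL by (simp add: mono_iff_le_Suc)
  moreover have "finite (range G)"
    using finite_stL G_in_stL by (metis finite_subset image_subset_iff)
  ultimately obtain T where T: "\<forall>t\<ge>T. G t = G T"
    using mono_finite_range_eventually_const by blast
  have "f i (G T) = G T" if i: "i < n" for i
  proof -
    obtain t where "t \<ge> T" "i \<in> S t"
      using fair[OF i] by (auto simp: infinite_nat_iff_unbounded_le)
    then show ?thesis
      using round(3)[OF G_in_stL] T by (metis le_SucI)
  qed
  moreover have "G t \<le> H" if H: "H \<in> stL n m" "\<forall>i<n. f i H = H" for H t
  proof (induction t)
    case 0
    then show ?case by (simp add: G0 le_fun_def)
  next
    case (Suc t)
    then show ?case
      using round_step_le_fixpoint[of "S t" n m f, OF _ step H(1)] f_mono H(2) in_S by blast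
  qed
  ultimately show ?thesis
    using T G_in_stL unfolding least_common_fp_def by blast
qed

end
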